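(* Let $p\in(0,1/2)$, $\beta<0$ and $\alpha=\frac{2}{2-p}$. Let $\zeta$ be the global positive increasing solution on $(0,\infty)$ of $$\zeta'=\frac{\alpha^2\zeta+\varphi^p\zeta^{-1}}{\alpha(\alpha-1)\varphi-\beta\zeta}$$ satisfying $\zeta(0^+)=0$ and $|\zeta(\varphi)-\gamma_\beta\varphi^{(p+1)/3}|\le\varphi^q$ for small $\varphi$. Here $\gamma_\beta=[3/(|\beta|(p+1))]^{1/3}$ and $q\in(\frac{p+1}{3},1)$. Then for every $\varepsilon>0$ there exists $\varphi_\varepsilon>0$ such that $$\Big(\frac{\alpha}{|\beta|}-\varepsilon\Big)\varphi\le\zeta(\varphi)\le\Big(\frac{\alpha}{|\beta|}+\varepsilon\Big)\varphi\quad\text{for all }\varphi\ge\varphi_\varepsilon.$$ *)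

theory Defs
  imports "HOL-Analysis.Analysis"
begin

end

theory Submission
  imports Defs
begin

(* Write w = \<zeta>(\<phi>)/\<phi>. The ODE becomes \<phi> w' = F - w, where F is its right-hand side.
   For large \<phi>: if w \<ge> \<alpha>/|\<beta>| + \<epsilon> then F \<le> w - \<epsilon>/(2\<alpha>), so w + \<epsilon>/(2\<alpha>) ln \<phi> is
   nonincreasing and w must fall below that level; if w \<le> \<alpha>/|\<beta>| - \<epsilon> then
   F \<ge> (1 + |\<beta>|\<epsilon>/\<alpha>^2) w, so w grows like a positive power of \<phi> until it exceeds that level.
   Once on the right side of either level, w cannot cross it again, since w' has the
   sign pushing it back. Hence w tends to \<alpha>/|\<beta>|. *)

lemma stays_below_if_deriv_neg:
  fixes f f' :: "real \<Rightarrow> real"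
  assumes der: "\<forall>x\<ge>a. (f has_real_derivative f' x) (at x)"
    and neg: "\<forall>x\<ge>a. f x \<ge> c \<longrightarrow> f' x < 0"
    and "a \<le> s" "f s < c" "s \<le> x"
  shows "f x < c"
proof (rule ccontr)
  assume "\<not> f x < c"
  have "continuous_on {s..x} f"
    using der \<open>a \<le> s\<close>
    by (intro continuous_at_imp_continuous_on ballI)
      (meson DERIV_isCont atLeastAtMost_iff order_trans)
  then obtain t where t: "t \<in> {s..x}" and max: "\<forall>y\<in>{s..x}. f y \<le> f t"
    using continuous_attains_sup[of "{s..x}" f] \<open>s \<le> x\<close> by auto
  have "f t \<ge> c" using max \<open>\<not> f x < c\<close> \<open>s \<le> x\<close> by force
  with \<open>f s < c\<close> t have "s < t" by (cases "t = s") auto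
  have "f' t < 0" "(f has_real_derivative f' t) (at t)"
    using neg der t \<open>f t \<ge> c\<close> \<open>a \<le> s\<close> by auto
  then obtain d where "d > 0" and left: "\<forall>h>0. h < d \<longrightarrow> f t < f (t - h)"
    using DERIV_neg_dec_left by blast
  define h where "h = min (d/2) (t - s)"
  have "f t < f (t - h)" using left \<open>d > 0\<close> \<open>s < t\<close> by (auto simp: h_def)
  moreover have "t - h \<in> {s..x}" using t \<open>d > 0\<close> \<open>s < t\<close> by (auto simp: h_def)
  ultimately show False using max by fastforce
qed

lemma exists_below_if_deriv_le_neg_inverse:
  fixes f f' :: "real \<Rightarrow> real"
  assumes der: "\<forall>x\<ge>a. (f has_real_derivative f' x) (at x)"
    and neg: "\<forall>x\<ge>a. f x \<ge> c \<longrightarrow> f' x \<le> - k / x"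
    and "k > 0" "a > 0"
  shows "\<exists>s\<ge>a. f s < c"
proof (rule ccontr)
  assume "\<not> ?thesis"
  hence above: "\<forall>x\<ge>a. f x \<ge> c" by force
  define u where "u x = f x + k * ln x" for x
  have u_le: "u x \<le> u a" if "x \<ge> a" for x
  proof (rule DERIV_nonpos_imp_nonincreasing[OF that])
    fix y assume "a \<le> y" "y \<le> x"
    then have "(u has_real_derivative f' y + k * (1 / y)) (at y)" "f' y + k * (1 / y) \<le> 0"
      using der neg above \<open>a > 0\<close> unfolding u_def by (auto intro!: derivative_eq_intros)
    then show "\<exists>z. (u has_real_derivative z) (at y) \<and> z \<le> 0" by blast
  qed
  define x where "x = max a (exp ((u a - c + 1) / k))"
  have "x \<ge> a" by (simp add: x_def)
  have "(u a - c + 1) / k \<le> ln x"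
    using \<open>a > 0\<close> by (simp add: x_def ln_ge_iff)
  hence "u a - c + 1 \<le> k * ln x" using \<open>k > 0\<close> by (simp add: field_simps)
  with u_le[OF \<open>x \<ge> a\<close>] above \<open>x \<ge> a\<close> show False by (force simp: u_def)
qed

lemma eventually_below_if_deriv_le_neg_inverse:
  fixes f f' :: "real \<Rightarrow> real"
  assumes der: "\<forall>x\<ge>a. (f has_real_derivative f' x) (at x)"
    and neg: "\<forall>x\<ge>a. f x \<ge> c \<longrightarrow> f' x \<le> - k / x"
    and "k > 0" "a > 0"
  shows "eventually (\<lambda>x. f x < c) at_top"
proof -
  obtain s where "s \<ge> a" "f s < c"
    using exists_below_if_deriv_le_neg_inverse[OF assms] by blast
  have "\<forall>x\<ge>a. f x \<ge> c \<longrightarrow> f' x < 0"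
  proof (intro allI impI)
    fix x assume "x \<ge> a" "f x \<ge> c"
    then have "f' x \<le> - k / x" "k / x > 0" using neg \<open>k > 0\<close> \<open>a > 0\<close> by auto
    then show "f' x < 0" by linarith
  qed
  with der \<open>s \<ge> a\<close> \<open>f s < c\<close> have "\<forall>x\<ge>s. f x < c"
    by (blast intro: stays_below_if_deriv_neg)
  then show ?thesis by (auto simp: eventually_at_top_linorder)
qed

lemma eventually_above_if_deriv_ge_proportional:
  fixes f f' :: "real \<Rightarrow> real"
  assumes der: "\<forall>x\<ge>a. (f has_real_derivative f' x) (at x)"
    and pos: "\<forall>x\<ge>a. f x > 0"
    and grow: "\<forall>x\<ge>a. f x \<le> c \<longrightarrow> f' x \<ge> k * f x / x"
    and "k > 0" "a > 0" "c > 0"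
  shows "eventually (\<lambda>x. f x > c) at_top"
proof -
  have "\<forall>x\<ge>a. ((\<lambda>x. - ln (f x)) has_real_derivative - (f' x / f x)) (at x)"
    using der pos by (auto intro!: derivative_eq_intros)
  moreover have "- (f' x / f x) \<le> - k / x" if "x \<ge> a" "- ln (f x) \<ge> - ln c" for x
  proof -
    have "f x \<le> c" using that pos \<open>c > 0\<close> by simp
    with grow that have "k * f x / x \<le> f' x" by blast
    then show ?thesis using pos that by (simp add: field_simps)
  qed
  ultimately have "eventually (\<lambda>x. - ln (f x) < - ln c) at_top"
    using \<open>k > 0\<close> \<open>a > 0\<close>
    by (intro eventually_below_if_deriv_le_neg_inverse[where a = a and k = k]) auto
  moreover have "eventually (\<lambda>x. f x > 0) at_top"
    using pos by (auto simp: eventually_at_top_linorder)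
  ultimately show ?thesis
    by eventually_elim (use \<open>c > 0\<close> in simp)
qed

lemma ode_rhs_le_slope_minus:
  fixes a b e x z P :: real
  assumes "a > 1" "b > 0" "e > 0" "x > 0" "2 * b / (a^2 * e) \<le> x"
    and "(a / b + e) * x \<le> z" "0 \<le> P" "P \<le> x"
  shows "(a^2 * z + P / z) / (a * (a - 1) * x + b * z) \<le> z / x - e / (2 * a)"
proof -
  define w where "w = z / x"
  define k where "k = e / (2 * a)"
  have z: "z = w * x" using \<open>x > 0\<close> by (simp add: w_def)
  have "a / b + e \<le> w" using assms(4,6) by (simp add: w_def field_simps)
  then have bw: "a + b * e \<le> b * w" using \<open>b > 0\<close> by (simp add: field_simps)
  have "a / b > 0" using assms(1,2) by simp
  then have "w > 0" using \<open>a / b + e \<le> w\<close> \<open>e > 0\<close> by linarith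
  have "k * (a * (a - 1) + b * w) \<le> k * (b * w * (a - 1) + b * w)"
  proof -
    have "a \<le> b * w" using bw mult_pos_pos[OF assms(2,3)] by linarith
    then have "a * (a - 1) \<le> b * w * (a - 1)" using \<open>a > 1\<close> by (simp add: mult_right_mono)
    then show ?thesis using \<open>e > 0\<close> \<open>a > 1\<close> unfolding k_def by (intro mult_left_mono) auto
  qed
  also have "\<dots> = b * e * w / 2" using \<open>a > 1\<close> by (simp add: k_def field_simps)
  finally have "k * (a * (a - 1) + b * w) \<le> b * e * w / 2" .
  moreover have "b * e * w \<le> w * (b * w - a)"
    using bw \<open>w > 0\<close> by (simp add: mult_left_mono mult.commute)
  moreover have "(w - k) * (a * (a - 1) + b * w) - a^2 * w
      = w * (b * w - a) - k * (a * (a - 1) + b * w)"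
    by (simp add: algebra_simps power2_eq_square)
  ultimately have gap: "b * e * w / 2 \<le> (w - k) * (a * (a - 1) + b * w) - a^2 * w"
    by linarith
  have "1 \<le> a^2 * e / (2 * b) * x"
    using assms(1-3,5) by (simp add: field_simps)
  then have "x * 1 \<le> x * (a^2 * e / (2 * b) * x)"
    using \<open>x > 0\<close> by (intro mult_left_mono) auto
  then have "P \<le> x * (a^2 * e / (2 * b)) * x"
    using \<open>P \<le> x\<close> by (simp only: mult.right_neutral mult.assoc)
  also have "\<dots> \<le> x * (b * e * w^2 / 2) * x"
  proof -
    have "a / b \<le> w" using \<open>a / b + e \<le> w\<close> \<open>e > 0\<close> by simp
    then have "(a / b)^2 \<le> w^2" using assms(1,2) by (intro power_mono) auto
    then have "a^2 / b \<le> b * w^2" using \<open>b > 0\<close> by (simp add: field_simps power2_eq_square)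
    then show ?thesis using assms(2-4) by (simp add: field_simps)
  qed
  finally have forcing: "P / (w * x^2) \<le> b * e * w / 2"
    using \<open>w > 0\<close> \<open>x > 0\<close> by (simp add: field_simps power2_eq_square)
  have den: "a * (a - 1) + b * w > 0" using assms(1,2) \<open>w > 0\<close> by (simp add: add_pos_pos)
  have "(a^2 * z + P / z) / (a * (a - 1) * x + b * z)
      = (a^2 * w + P / (w * x^2)) / (a * (a - 1) + b * w)"
    using \<open>x > 0\<close> \<open>w > 0\<close> den by (simp add: z field_simps power2_eq_square)
  also have "\<dots> \<le> w - k"
  proof -
    have "a^2 * w + P / (w * x^2) \<le> (w - k) * (a * (a - 1) + b * w)"
      using gap forcing by linarith
    then show ?thesis using den by (simp add: pos_divide_le_eq)
  qed
  finally show ?thesis by (simp add: w_def k_def)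
qed

lemma ode_rhs_ge_slope_times:
  fixes a b e x z P :: real
  assumes "a > 1" "b > 0" "e > 0" "x > 0" "z > 0" "z \<le> (a / b - e) * x" "0 \<le> P"
  shows "(1 + b * e / a^2) * (z / x) \<le> (a^2 * z + P / z) / (a * (a - 1) * x + b * z)"
proof -
  have "b * z \<le> (a - b * e) * x" using assms(2,6) by (simp add: field_simps)
  then have "(1 + b * e / a^2) * (z / x) * (a * (a - 1) * x + b * z)
      \<le> (1 + b * e / a^2) * (z / x) * ((a^2 - b * e) * x)"
    using assms(1-5) by (intro mult_left_mono) (auto simp: power2_eq_square algebra_simps)
  also have "\<dots> = (a^2 - (b * e)^2 / a^2) * z"
    using assms(1,4) by (simp add: field_simps power2_eq_square)
  also have "\<dots> \<le> a^2 * z + P / z"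
    using assms(5,7) by (simp add: algebra_simps)
  finally show ?thesis
    using assms(1,2,4,5) by (simp add: le_divide_eq add_pos_pos)
qed

locale profile_ode =
  fixes a b p :: real and \<zeta> :: "real \<Rightarrow> real"
  assumes a_gt_1: "a > 1" and b_pos: "b > 0" and p_le_1: "p \<le> 1"
    and pos: "\<And>x. x > 0 \<Longrightarrow> \<zeta> x > 0"
    and ode: "\<And>x. x > 0 \<Longrightarrow> (\<zeta> has_real_derivative
                 (a^2 * \<zeta> x + x powr p / \<zeta> x) / (a * (a - 1) * x + b * \<zeta> x)) (at x)"
begin

definition rhs :: "real \<Rightarrow> real" where
  "rhs x = (a^2 * \<zeta> x + x powr p / \<zeta> x) / (a * (a - 1) * x + b * \<zeta> x)"

lemma slope_has_derivative:
  assumes "x > 0"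
  shows "((\<lambda>x. \<zeta> x / x) has_real_derivative (rhs x - \<zeta> x / x) / x) (at x)"
proof -
  have "((\<lambda>x. \<zeta> x / x) has_real_derivative (rhs x * x - \<zeta> x * 1) / (x * x)) (at x)"
    using ode assms unfolding rhs_def by (intro DERIV_divide DERIV_ident) auto
  then show ?thesis using assms by (simp add: field_simps)
qed

lemma eventually_slope_less:
  assumes "a / b < c"
  shows "eventually (\<lambda>x. \<zeta> x / x < c) at_top"
proof -
  define e where "e = c - a / b"
  define x\<^sub>0 where "x\<^sub>0 = max 1 (2 * b / (a^2 * e))"
  have "e > 0" using assms by (simp add: e_def)
  have "(rhs x - \<zeta> x / x) / x \<le> - (e / (2 * a)) / x" if "x \<ge> x\<^sub>0" "\<zeta> x / x \<ge> c" for x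
  proof -
    have "x \<ge> 1" "2 * b / (a^2 * e) \<le> x" using that by (auto simp: x\<^sub>0_def)
    have "(a / b + e) * x \<le> \<zeta> x" using that \<open>x \<ge> 1\<close> by (simp add: e_def pos_le_divide_eq)
    moreover have "x powr p \<le> x"
      using powr_mono[OF p_le_1 \<open>x \<ge> 1\<close>] \<open>x \<ge> 1\<close> by simp
    ultimately have "rhs x \<le> \<zeta> x / x - e / (2 * a)"
      unfolding rhs_def using a_gt_1 b_pos \<open>e > 0\<close> \<open>x \<ge> 1\<close> \<open>2 * b / (a^2 * e) \<le> x\<close>
      by (intro ode_rhs_le_slope_minus) auto
    then have "rhs x - \<zeta> x / x \<le> - (e / (2 * a))" by linarith
    then show ?thesis using \<open>x \<ge> 1\<close> by (intro divide_right_mono) auto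
  qed
  moreover have "x\<^sub>0 > 0" "e / (2 * a) > 0" using \<open>e > 0\<close> a_gt_1 by (auto simp: x\<^sub>0_def)
  ultimately show ?thesis
    using slope_has_derivative
    by (intro eventually_below_if_deriv_le_neg_inverse
        [where a = x\<^sub>0 and k = "e / (2 * a)" and f' = "\<lambda>x. (rhs x - \<zeta> x / x) / x"]) auto
qed

lemma eventually_slope_greater:
  assumes "c < a / b"
  shows "eventually (\<lambda>x. c < \<zeta> x / x) at_top"
proof (cases "c > 0")
  case False
  have "eventually (\<lambda>x. 0 < \<zeta> x / x) at_top"
    using pos by (auto simp: eventually_at_top_linorder intro!: exI[of _ 1])
  then show ?thesis by eventually_elim (use False in simp)
next
  case True
  define e where "e = a / b - c"
  have "e > 0" using assms by (simp add: e_def)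
  have "b * e / a^2 * (\<zeta> x / x) / x \<le> (rhs x - \<zeta> x / x) / x"
    if "x \<ge> 1" "\<zeta> x / x \<le> c" for x
  proof -
    have "\<zeta> x \<le> (a / b - e) * x" using that by (simp add: e_def pos_divide_le_eq)
    then have "(1 + b * e / a^2) * (\<zeta> x / x) \<le> rhs x"
      unfolding rhs_def using a_gt_1 b_pos \<open>e > 0\<close> that pos
      by (intro ode_rhs_ge_slope_times) auto
    then have "b * e / a^2 * (\<zeta> x / x) \<le> rhs x - \<zeta> x / x"
      unfolding distrib_right mult_1 by linarith
    then show ?thesis using that by (intro divide_right_mono) auto
  qed
  moreover have "b * e / a^2 > 0" using b_pos \<open>e > 0\<close> a_gt_1 by simp
  ultimately show ?thesis
    using slope_has_derivative pos True
    by (intro eventually_above_if_deriv_ge_proportional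
        [where a = 1 and f' = "\<lambda>x. (rhs x - \<zeta> x / x) / x"]) auto
qed

lemma slope_tendsto: "((\<lambda>x. \<zeta> x / x) \<longlongrightarrow> a / b) at_top"
  by (rule order_tendstoI) (use eventually_slope_greater eventually_slope_less in auto)

end

lemma linear_bounds_if_ratio_tendsto:
  fixes f :: "real \<Rightarrow> real"
  assumes "((\<lambda>x. f x / x) \<longlongrightarrow> L) at_top" "\<epsilon> > 0"
  shows "\<exists>x\<^sub>0>0. \<forall>x\<ge>x\<^sub>0. (L - \<epsilon>) * x \<le> f x \<and> f x \<le> (L + \<epsilon>) * x"
proof -
  have "eventually (\<lambda>x. \<bar>f x / x - L\<bar> < \<epsilon>) at_top"
    using assms by (auto simp: tendsto_iff dist_real_def)
  then obtain N where N: "\<forall>x\<ge>N. \<bar>f x / x - L\<bar> < \<epsilon>"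
    by (auto simp: eventually_at_top_linorder)
  have "(L - \<epsilon>) * x \<le> f x \<and> f x \<le> (L + \<epsilon>) * x" if "x \<ge> max N 1" for x
  proof -
    have "x > 0" "L - \<epsilon> < f x / x" "f x / x < L + \<epsilon>"
      using that N by (auto simp: abs_less_iff)
    then show ?thesis by (simp add: pos_less_divide_eq pos_divide_less_eq less_imp_le)
  qed
  then show ?thesis by (intro exI[of _ "max N 1"]) auto
qed

theorem proposition7p3:
  fixes p \<beta> \<alpha> \<gamma> q :: real and \<zeta> :: "real \<Rightarrow> real"
  assumes hp: "0 < p" "p < 1/2"
    and h\<beta>: "\<beta> < 0"
    and h\<alpha>: "\<alpha> = 2 / (2 - p)"
    and h\<gamma>: "\<gamma> = root 3 (3 / (\<bar>\<beta>\<bar> * (p + 1)))"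
    and hq: "(p + 1) / 3 < q" "q < 1"
    and hpos: "\<forall>\<phi>>0. \<zeta> \<phi> > 0"
    and hinc: "strict_mono_on {0<..} \<zeta>"
    and hode: "\<forall>\<phi>>0. (\<zeta> has_real_derivative
                 ((\<alpha>^2 * \<zeta> \<phi> + \<phi> powr p / \<zeta> \<phi>) / (\<alpha> * (\<alpha> - 1) * \<phi> - \<beta> * \<zeta> \<phi>))) (at \<phi>)"
    and hlim0: "(\<zeta> \<longlongrightarrow> 0) (at_right 0)"
    and hasym: "\<forall>\<^sub>F \<phi> in at_right 0. \<bar>\<zeta> \<phi> - \<gamma> * \<phi> powr ((p + 1) / 3)\<bar> \<le> \<phi> powr q"
  shows "\<forall>\<epsilon>>0. \<exists>\<phi>\<epsilon>>0. \<forall>\<phi>\<ge>\<phi>\<epsilon>.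
           (\<alpha> / \<bar>\<beta>\<bar> - \<epsilon>) * \<phi> \<le> \<zeta> \<phi> \<and> \<zeta> \<phi> \<le> (\<alpha> / \<bar>\<beta>\<bar> + \<epsilon>) * \<phi>"
proof -
  interpret profile_ode \<alpha> "\<bar>\<beta>\<bar>" p \<zeta>
  proof
    show "\<alpha> > 1" using hp by (simp add: h\<alpha> field_simps)
    show "(\<zeta> has_real_derivative (\<alpha>^2 * \<zeta> x + x powr p / \<zeta> x)
            / (\<alpha> * (\<alpha> - 1) * x + \<bar>\<beta>\<bar> * \<zeta> x)) (at x)" if "x > 0" for x
      using hode that h\<beta> by simp
  qed (use hp h\<beta> hpos in auto)
  show ?thesis
    using slope_tendsto by (blast intro: linear_bounds_if_ratio_tendsto)
qed

end
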